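(* Let $(M,g)$ be a general-relativistic spacetime and let $\gamma:\mathbb{R}\to M$ and $\tilde\gamma:\mathbb{R}\to M$ be two clocks (parameter ranging over all of $\mathbb{R}$) whose worldlines do not intersect, but which are sufficiently close to each other that the radar method can be carried through in both directions. If $\tilde\gamma$ is synchroneous to $\gamma$ and $\gamma$ is synchroneous to $\tilde\gamma$, then the radar distance $R(\tilde t)$ of $\tilde\gamma(\tilde t)$ with respect to $\gamma$ is a constant $R_0$ (independent of $\tilde t$), and the radar distance $\tilde R(t)$ of $\gamma(t)$ with respect to $\tilde\gamma$ is the same constant $R_0$.
   Context: A general-relativistic spacetime is a 4-manifold with a smooth Lorentzian metric $g$ and a time orientation. A clock is a smooth embedding $\gamma$ of a real interval into $M$ with everywhere timelike, future-pointing tangent vector. Light rays are lightlike geodesics. Radar method: for an event $q$, if there is precisely one future-pointing light ray from a point $\gamma(t_1)$ to $q$ and precisely one future-pointing light ray from $q$ to a point $\gamma(t_2)$, the radar time and radar distance of $q$ with respect to $\gamma$ are $T=\tfrac12(t_2+t_1)$ and $R=\tfrac12(t_2-t_1)$. "The radar method can be carried through in both directions" means: for every $\tilde t$ the event $\tilde\gamma(\tilde t)$ has well-defined radar time $T(\tilde t)$ and radar distance $R(\tilde t)$ with respect to $\gamma$, and for every $t$ the event $\gamma(t)$ has well-defined radar time $\tilde T(t)$ and radar distance $\tilde R(t)$ with respect to $\tilde\gamma$ (each event lying in a radar neighborhood of the other clock, so that these are smooth functions). $\tilde\gamma$ is synchroneous to $\gamma$ if $T(\tilde t)=\tilde t$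 for all $\tilde t$; $\gamma$ is synchroneous to $\tilde\gamma$ if $\tilde T(t)=t$ for all $t$. *)

theory Defs
  imports "HOL-Analysis.Analysis"
begin

definition partial_d :: "('a::euclidean_space \<Rightarrow> real) \<Rightarrow> 'a \<Rightarrow> 'a \<Rightarrow> real" where
  "partial_d f b x = frechet_derivative f (at x) b"

primrec Ck_on :: "nat \<Rightarrow> 'a::euclidean_space set \<Rightarrow> ('a \<Rightarrow> real) \<Rightarrow> bool" where
  "Ck_on 0 S f = continuous_on S f"
| "Ck_on (Suc k) S f =
     ((\<forall>x\<in>S. f differentiable (at x)) \<and> (\<forall>b\<in>Basis. Ck_on k S (partial_d f b)))"

definition smooth_fun_on :: "'a::euclidean_space set \<Rightarrow> ('a \<Rightarrow> real) \<Rightarrow> bool" where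
  "smooth_fun_on S f \<longleftrightarrow> (\<forall>k. Ck_on k S f)"

definition smooth_map_on :: "'a::euclidean_space set \<Rightarrow> ('a \<Rightarrow> 'b::euclidean_space) \<Rightarrow> bool" where
  "smooth_map_on S F \<longleftrightarrow> (\<forall>b\<in>Basis. smooth_fun_on S (\<lambda>x. F x \<bullet> b))"

type_synonym 'm chart = "'m set \<times> ('m \<Rightarrow> real^4)"

definition is_chart :: "'m::topological_space set \<Rightarrow> ('m \<Rightarrow> real^4) \<Rightarrow> bool" where
  "is_chart U \<phi> \<longleftrightarrow> open U \<and> open (\<phi> ` U) \<and> homeomorphism U (\<phi> ` U) \<phi> (inv_into U \<phi>)"

definition smooth_atlas :: "'m::topological_space chart set \<Rightarrow> bool" where
  "smooth_atlas A \<longleftrightarrow>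
     (\<forall>(U,\<phi>)\<in>A. is_chart U \<phi>) \<and> \<Union>(fst ` A) = UNIV \<and>
     (\<forall>(U,\<phi>)\<in>A. \<forall>(V,\<psi>)\<in>A. smooth_map_on (\<phi> ` (U \<inter> V)) (\<psi> \<circ> inv_into U \<phi>))"

definition jac :: "'m set \<Rightarrow> ('m \<Rightarrow> real^4) \<Rightarrow> ('m \<Rightarrow> real^4) \<Rightarrow> real^4 \<Rightarrow> real^4^4" where
  "jac U \<phi> \<psi> x = matrix (frechet_derivative (\<psi> \<circ> inv_into U \<phi>) (at x))"

definition minkowski :: "real^4^4" where
  "minkowski = (\<chi> i j. if i = j then (if i = 0 then -1 else 1) else 0)"

definition lorentz_form :: "real^4^4 \<Rightarrow> bool" where
  "lorentz_form M \<longleftrightarrow> transpose M = M \<and>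
     (\<exists>P. invertible P \<and> M = transpose P ** minkowski ** P)"

definition gq :: "real^4^4 \<Rightarrow> real^4 \<Rightarrow> real^4 \<Rightarrow> real" where
  "gq M v w = v \<bullet> (M *v w)"

definition lorentz_metric ::
  "'m::topological_space chart set \<Rightarrow> ('m chart \<Rightarrow> real^4 \<Rightarrow> real^4^4) \<Rightarrow> bool" where
  "lorentz_metric A G \<longleftrightarrow>
     (\<forall>(U,\<phi>)\<in>A. smooth_map_on (\<phi> ` U) (G (U,\<phi>)) \<and> (\<forall>x\<in>\<phi> ` U. lorentz_form (G (U,\<phi>) x))) \<and>
     (\<forall>(U,\<phi>)\<in>A. \<forall>(V,\<psi>)\<in>A. \<forall>x\<in>\<phi> ` (U \<inter> V).
        G (U,\<phi>) x = transpose (jac U \<phi> \<psi> x) ** G (V,\<psi>) (\<psi> (inv_into U \<phi> x)) ** jac U \<phi> \<psi> x)"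

text \<open>A time orientation: a continuous timelike vector field X (given in chart components);
  future-pointing causal vectors are those v with g(v,X) < 0.\<close>
definition time_orientation ::
  "'m::topological_space chart set \<Rightarrow> ('m chart \<Rightarrow> real^4 \<Rightarrow> real^4^4)
     \<Rightarrow> ('m chart \<Rightarrow> real^4 \<Rightarrow> real^4) \<Rightarrow> bool" where
  "time_orientation A G X \<longleftrightarrow>
     (\<forall>(U,\<phi>)\<in>A. continuous_on (\<phi> ` U) (X (U,\<phi>)) \<and>
        (\<forall>x\<in>\<phi> ` U. gq (G (U,\<phi>) x) (X (U,\<phi>) x) (X (U,\<phi>) x) < 0)) \<and>
     (\<forall>(U,\<phi>)\<in>A. \<forall>(V,\<psi>)\<in>A. \<forall>x\<in>\<phi> ` (U \<inter> V).
        X (V,\<psi>) (\<psi> (inv_into U \<phi> x)) = jac U \<phi> \<psi> x *v X (U,\<phi>) x)"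

definition spacetime ::
  "'m::{t2_space,second_countable_topology} chart set \<Rightarrow> ('m chart \<Rightarrow> real^4 \<Rightarrow> real^4^4)
     \<Rightarrow> ('m chart \<Rightarrow> real^4 \<Rightarrow> real^4) \<Rightarrow> bool" where
  "spacetime A G X \<longleftrightarrow> smooth_atlas A \<and> lorentz_metric A G \<and> time_orientation A G X"

definition smooth_curve_on :: "'m::topological_space chart set \<Rightarrow> real set \<Rightarrow> (real \<Rightarrow> 'm) \<Rightarrow> bool" where
  "smooth_curve_on A I c \<longleftrightarrow> open I \<and> continuous_on I c \<and>
     (\<forall>(U,\<phi>)\<in>A. smooth_map_on {s\<in>I. c s \<in> U} (\<phi> \<circ> c))"

definition cvel :: "('m \<Rightarrow> real^4) \<Rightarrow> (real \<Rightarrow> 'm) \<Rightarrow> real \<Rightarrow> real^4" where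
  "cvel \<phi> c s = vector_derivative (\<phi> \<circ> c) (at s)"

definition christoffel :: "(real^4 \<Rightarrow> real^4^4) \<Rightarrow> real^4 \<Rightarrow> 4 \<Rightarrow> 4 \<Rightarrow> 4 \<Rightarrow> real" where
  "christoffel Gf y k i j = (1/2) * (\<Sum>l\<in>UNIV. matrix_inv (Gf y) $ k $ l *
      (partial_d (\<lambda>z. Gf z $ l $ j) (axis i 1) y + partial_d (\<lambda>z. Gf z $ l $ i) (axis j 1) y
       - partial_d (\<lambda>z. Gf z $ i $ j) (axis l 1) y))"

definition geodesic_on ::
  "'m::topological_space chart set \<Rightarrow> ('m chart \<Rightarrow> real^4 \<Rightarrow> real^4^4) \<Rightarrow> real set \<Rightarrow> (real \<Rightarrow> 'm) \<Rightarrow> bool" where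
  "geodesic_on A G I c \<longleftrightarrow> smooth_curve_on A I c \<and>
     (\<forall>(U,\<phi>)\<in>A. \<forall>s\<in>I. c s \<in> U \<longrightarrow>
        (\<forall>k. vector_derivative (\<lambda>r. cvel \<phi> c r) (at s) $ k +
              (\<Sum>i\<in>UNIV. \<Sum>j\<in>UNIV. christoffel (G (U,\<phi>)) (\<phi> (c s)) k i j
                   * cvel \<phi> c s $ i * cvel \<phi> c s $ j) = 0))"

definition fp_lightlike_geodesic_on ::
  "'m::topological_space chart set \<Rightarrow> ('m chart \<Rightarrow> real^4 \<Rightarrow> real^4^4) \<Rightarrow> ('m chart \<Rightarrow> real^4 \<Rightarrow> real^4)
     \<Rightarrow> real set \<Rightarrow> (real \<Rightarrow> 'm) \<Rightarrow> bool" where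
  "fp_lightlike_geodesic_on A G X I c \<longleftrightarrow> geodesic_on A G I c \<and>
     (\<forall>(U,\<phi>)\<in>A. \<forall>s\<in>I. c s \<in> U \<longrightarrow>
        cvel \<phi> c s \<noteq> 0 \<and>
        gq (G (U,\<phi>) (\<phi> (c s))) (cvel \<phi> c s) (cvel \<phi> c s) = 0 \<and>
        gq (G (U,\<phi>) (\<phi> (c s))) (cvel \<phi> c s) (X (U,\<phi>) (\<phi> (c s))) < 0)"

text \<open>A future-pointing light ray from p to q: a future-pointing lightlike geodesic segment
  parametrised (affinely) over [0,1] with c 0 = p, c 1 = q.  Two rays are the same iff they agree on [0,1].\<close>
definition light_ray ::
  "'m::topological_space chart set \<Rightarrow> ('m chart \<Rightarrow> real^4 \<Rightarrow> real^4^4) \<Rightarrow> ('m chart \<Rightarrow> real^4 \<Rightarrow> real^4)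
     \<Rightarrow> (real \<Rightarrow> 'm) \<Rightarrow> 'm \<Rightarrow> 'm \<Rightarrow> bool" where
  "light_ray A G X c p q \<longleftrightarrow>
     (\<exists>a b. a < 0 \<and> 1 < b \<and> fp_lightlike_geodesic_on A G X {a<..<b} c) \<and> c 0 = p \<and> c 1 = q"

definition clock ::
  "'m::topological_space chart set \<Rightarrow> ('m chart \<Rightarrow> real^4 \<Rightarrow> real^4^4) \<Rightarrow> ('m chart \<Rightarrow> real^4 \<Rightarrow> real^4)
     \<Rightarrow> (real \<Rightarrow> 'm) \<Rightarrow> bool" where
  "clock A G X \<gamma> \<longleftrightarrow> smooth_curve_on A UNIV \<gamma> \<and> inj \<gamma> \<and> continuous_on (range \<gamma>) (inv \<gamma>) \<and>
     (\<forall>(U,\<phi>)\<in>A. \<forall>s. \<gamma> s \<in> U \<longrightarrow>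
        gq (G (U,\<phi>) (\<phi> (\<gamma> s))) (cvel \<phi> \<gamma> s) (cvel \<phi> \<gamma> s) < 0 \<and>
        gq (G (U,\<phi>) (\<phi> (\<gamma> s))) (cvel \<phi> \<gamma> s) (X (U,\<phi>) (\<phi> (\<gamma> s))) < 0)"

definition radar_emission where
  "radar_emission A G X \<gamma> q t1 \<longleftrightarrow>
     (\<exists>c. light_ray A G X c (\<gamma> t1) q) \<and>
     (\<forall>t c t' c'. light_ray A G X c (\<gamma> t) q \<and> light_ray A G X c' (\<gamma> t') q
        \<longrightarrow> t = t' \<and> (\<forall>s\<in>{0..1}. c s = c' s))"

definition radar_reception where
  "radar_reception A G X \<gamma> q t2 \<longleftrightarrow>
     (\<exists>c. light_ray A G X c q (\<gamma> t2)) \<and>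
     (\<forall>t c t' c'. light_ray A G X c q (\<gamma> t) \<and> light_ray A G X c' q (\<gamma> t')
        \<longrightarrow> t = t' \<and> (\<forall>s\<in>{0..1}. c s = c' s))"

definition has_radar where
  "has_radar A G X \<gamma> q T R \<longleftrightarrow>
     (\<exists>t1 t2. radar_emission A G X \<gamma> q t1 \<and> radar_reception A G X \<gamma> q t2 \<and>
        T = (t2 + t1) / 2 \<and> R = (t2 - t1) / 2)"

end

theory Submission
  imports Defs
begin

text \<open>The light ray emitted by \<open>\<gamma>\<close> at \<open>t - R(t)\<close> and received by \<open>\<gamma>'\<close> at \<open>t\<close> is, by uniqueness
  of radar rays, also the ray that determines the radar coordinates of \<open>\<gamma>(t - R(t))\<close> with respect
  to \<open>\<gamma>'\<close>; similarly for the returning ray.  With both clocks synchroneous this gives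
  \<open>R'(t \<plusminus> R(t)) = R(t)\<close> and \<open>R(t \<plusminus> R'(t)) = R'(t)\<close>, hence \<open>a = R'\<close> satisfies
  \<open>a(s \<plusminus> 2 a(s)) = a(s)\<close>.  For continuous \<open>a\<close>, the map \<open>s \<mapsto> s + 2 a(s)\<close> is then injective,
  hence strictly monotone, so \<open>s \<mapsto> s + 4 a(s)\<close> is strictly increasing and preserves \<open>a\<close>;
  iterating it \<open>n\<close> times shifts by \<open>4 n a(s)\<close>, which forces \<open>a\<close> to be nondecreasing.
  The same for \<open>-a\<close> makes \<open>a\<close> constant.\<close>

lemma smooth_fun_on_imp_continuous_on: "smooth_fun_on S f \<Longrightarrow> continuous_on S f"
  unfolding smooth_fun_on_def by (metis Ck_on.simps(1))

lemma strict_mono_funpow: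
  fixes f :: "'a::order \<Rightarrow> 'a"
  assumes "strict_mono f"
  shows "strict_mono (f ^^ n)"
  by (induction n) (auto simp: strict_mono_def assms[THEN strict_monoD])

lemma mono_if_strict_mono_invariant_shift:
  fixes b :: "real \<Rightarrow> real" and c :: real
  assumes c: "c > 0"
    and shift_mono: "strict_mono (\<lambda>s. s + c * b s)"
    and invariant: "\<And>s. b (s + c * b s) = b s"
  shows "mono b"
proof (rule monoI, rule ccontr)
  define \<psi> where "\<psi> = (\<lambda>s. s + c * b s)"
  have invariant_iterate: "b ((\<psi> ^^ n) s) = b s" for n s
  proof (induction n)
    case (Suc n)
    have "b ((\<psi> ^^ Suc n) s) = b ((\<psi> ^^ n) s)"
      by (simp add: \<psi>_def invariant)
    with Suc show ?case by simp
  qed simp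
  have iterate: "(\<psi> ^^ n) s = s + real n * c * b s" for n s
  proof (induction n)
    case (Suc n)
    have "(\<psi> ^^ Suc n) s = (\<psi> ^^ n) s + c * b ((\<psi> ^^ n) s)"
      by (simp add: \<psi>_def)
    with Suc invariant_iterate[of n s] show ?case by (simp add: algebra_simps)
  qed simp
  fix x y :: real
  assume "x \<le> y" and "\<not> b x \<le> b y"
  then have gap: "b y < b x" and "x < y"
    by (auto simp: order.order_iff_strict)
  obtain n :: nat where "(y - x) / (c * (b x - b y)) < real n"
    using reals_Archimedean2 by blast
  with c gap have "y + real n * c * b y < x + real n * c * b x"
    by (simp add: divide_less_eq algebra_simps)
  moreover have "(\<psi> ^^ n) x < (\<psi> ^^ n) y"
    using strict_mono_funpow[of \<psi> n] shift_mono \<open>x < y\<close>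
    by (simp add: \<psi>_def strict_monoD)
  ultimately show False by (simp add: iterate)
qed

lemma strict_mono_double_shift:
  fixes b :: "real \<Rightarrow> real" and c :: real
  assumes cont: "continuous_on UNIV b" and invariant: "\<And>s. b (s + c * b s) = b s"
  shows "strict_mono (\<lambda>s. s + 2 * c * b s)"
proof -
  define \<phi> where "\<phi> = (\<lambda>s. s + c * b s)"
  have "continuous_on UNIV \<phi>"
    unfolding \<phi>_def using cont by (intro continuous_intros)
  moreover have "inj \<phi>"
  proof (rule injI)
    fix u v assume eq: "\<phi> u = \<phi> v"
    then have "b u = b v" using invariant[of u] invariant[of v] by (simp add: \<phi>_def)
    with eq show "u = v" by (simp add: \<phi>_def)
  qed
  ultimately have "strict_mono_on UNIV \<phi> \<or> strict_antimono_on UNIV \<phi>"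
    using injective_eq_monotone_map[of UNIV \<phi>] by simp
  then have "strict_mono (\<phi> \<circ> \<phi>)"
    by (auto simp: strict_mono_def monotone_on_def)
  moreover have "(\<phi> \<circ> \<phi>) s = s + 2 * c * b s" for s
    using invariant[of s] by (simp add: \<phi>_def)
  ultimately show ?thesis by (simp add: comp_def)
qed

lemma mono_if_continuous_invariant_shift:
  fixes b :: "real \<Rightarrow> real" and c :: real
  assumes "c > 0" and "continuous_on UNIV b" and invariant: "\<And>s. b (s + c * b s) = b s"
  shows "mono b"
proof (rule mono_if_strict_mono_invariant_shift[of "2 * c"])
  show "strict_mono (\<lambda>s. s + 2 * c * b s)"
    using strict_mono_double_shift assms(2,3) by blast
  show "b (s + 2 * c * b s) = b s" for s
    using invariant[of "s + c * b s"] invariant[of s] by (simp add: algebra_simps)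
qed (use \<open>c > 0\<close> in simp)

lemma constant_if_continuous_invariant_shifts:
  fixes a :: "real \<Rightarrow> real" and c :: real
  assumes "c > 0" and cont: "continuous_on UNIV a"
    and forward: "\<And>s. a (s + c * a s) = a s" and backward: "\<And>s. a (s - c * a s) = a s"
  shows "a x = a y"
proof -
  have "mono a"
    using mono_if_continuous_invariant_shift \<open>c > 0\<close> cont forward by blast
  moreover have "mono (\<lambda>s. - a s)"
    using \<open>c > 0\<close> cont backward
    by (intro mono_if_continuous_invariant_shift[of c] continuous_intros) simp_all
  ultimately show ?thesis
    by (metis antisym linear monoD neg_le_iff_le)
qed

lemma has_radar_iff_emission_reception:
  fixes T R :: real
  shows "has_radar A G X \<gamma> q T R \<longleftrightarrow>
     radar_emission A G X \<gamma> q (T - R) \<and> radar_reception A G X \<gamma> q (T + R)"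
  unfolding has_radar_def
proof
  assume "\<exists>t1 t2. radar_emission A G X \<gamma> q t1 \<and> radar_reception A G X \<gamma> q t2 \<and>
    T = (t2 + t1) / 2 \<and> R = (t2 - t1) / 2"
  then obtain t1 t2 where "radar_emission A G X \<gamma> q t1" "radar_reception A G X \<gamma> q t2"
    and "T - R = t1" "T + R = t2"
    by (auto simp: field_simps)
  then show "radar_emission A G X \<gamma> q (T - R) \<and> radar_reception A G X \<gamma> q (T + R)"
    by simp
qed (rule exI[of _ "T - R"], rule exI[of _ "T + R"], simp)

lemma radar_emission_unique:
  "radar_emission A G X \<gamma> q t1 \<Longrightarrow> light_ray A G X c (\<gamma> t) q \<Longrightarrow> t = t1"
  unfolding radar_emission_def by blast

lemma radar_reception_unique:
  "radar_reception A G X \<gamma> q t2 \<Longrightarrow> light_ray A G X c q (\<gamma> t) \<Longrightarrow> t = t2"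
  unfolding radar_reception_def by blast

lemma radar_reception_of_emission_event:
  fixes T R T' R' :: real
  assumes "has_radar A G X \<gamma> (\<gamma>' t') T R"
    and "has_radar A G X \<gamma>' (\<gamma> (T - R)) T' R'"
  shows "T' + R' = t'"
proof -
  obtain c where "light_ray A G X c (\<gamma> (T - R)) (\<gamma>' t')"
    using assms(1) unfolding has_radar_iff_emission_reception radar_emission_def by blast
  moreover have "radar_reception A G X \<gamma>' (\<gamma> (T - R)) (T' + R')"
    using assms(2) unfolding has_radar_iff_emission_reception by blast
  ultimately show ?thesis by (metis radar_reception_unique)
qed

lemma radar_emission_of_reception_event:
  fixes T R T' R' :: real
  assumes "has_radar A G X \<gamma> (\<gamma>' t') T R"
    and "has_radar A G X \<gamma>' (\<gamma> (T + R)) T' R'"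
  shows "T' - R' = t'"
proof -
  obtain c where "light_ray A G X c (\<gamma>' t') (\<gamma> (T + R))"
    using assms(1) unfolding has_radar_iff_emission_reception radar_reception_def by blast
  moreover have "radar_emission A G X \<gamma>' (\<gamma> (T + R)) (T' - R')"
    using assms(2) unfolding has_radar_iff_emission_reception by blast
  ultimately show ?thesis by (metis radar_emission_unique)
qed

theorem proposition3:
  fixes A :: "'m::{t2_space,second_countable_topology} chart set"
    and G :: "'m chart \<Rightarrow> real^4 \<Rightarrow> real^4^4"
    and X :: "'m chart \<Rightarrow> real^4 \<Rightarrow> real^4"
    and \<gamma> \<gamma>t :: "real \<Rightarrow> 'm"
    and T R Tt Rt :: "real \<Rightarrow> real"
  assumes "spacetime A G X"
    and "clock A G X \<gamma>" and "clock A G X \<gamma>t"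
    and "range \<gamma> \<inter> range \<gamma>t = {}"
    and "\<forall>tt. has_radar A G X \<gamma> (\<gamma>t tt) (T tt) (R tt)"
    and "\<forall>t. has_radar A G X \<gamma>t (\<gamma> t) (Tt t) (Rt t)"
    and "smooth_fun_on UNIV T" and "smooth_fun_on UNIV R"
    and "smooth_fun_on UNIV Tt" and "smooth_fun_on UNIV Rt"
    and "\<forall>tt. T tt = tt"
    and "\<forall>t. Tt t = t"
  shows "\<exists>R0. (\<forall>tt. R tt = R0) \<and> (\<forall>t. Rt t = R0)"
proof -
  have radar: "has_radar A G X \<gamma> (\<gamma>t tt) tt (R tt)" for tt
    using assms(5,11) by metis
  have radar': "has_radar A G X \<gamma>t (\<gamma> t) t (Rt t)" for t
    using assms(6,12) by metis
  have Rt_at: "Rt (tt - R tt) = R tt" "Rt (tt + R tt) = R tt" for tt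
    using radar_reception_of_emission_event[OF radar[of tt] radar']
      radar_emission_of_reception_event[OF radar[of tt] radar'] by linarith+
  have R_at: "R (t - Rt t) = Rt t" "R (t + Rt t) = Rt t" for t
    using radar_reception_of_emission_event[OF radar'[of t] radar]
      radar_emission_of_reception_event[OF radar'[of t] radar] by linarith+
  have "Rt t = Rt 0" for t
  proof (rule constant_if_continuous_invariant_shifts[of 2 Rt])
    show "(2::real) > 0" by simp
    show "continuous_on UNIV Rt"
      using assms(10) by (rule smooth_fun_on_imp_continuous_on)
    show "Rt (s + 2 * Rt s) = Rt s" for s
      using Rt_at(2)[of "s + Rt s"] R_at(2)[of s] by (simp add: algebra_simps)
    show "Rt (s - 2 * Rt s) = Rt s" for s
      using Rt_at(1)[of "s - Rt s"] R_at(1)[of s] by (simp add: algebra_simps)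
  qed
  moreover have "R tt = Rt 0" for tt
    using R_at(2)[of "tt - Rt 0"] calculation[of "tt - Rt 0"] by simp
  ultimately show ?thesis by blast
qed

end
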